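(* For every fixed integer $l \ge 2$ there is a constant $c$ depending only on $l$ such that, for all integers $q$ large enough and all $n > c q^2$, AME states of defect $l$ in $(\mathbb{C}^q)^{\otimes n}$ do not exist.
   Context: A pure state $|\psi\rangle \in (\mathbb{C}^q)^{\otimes n}$ is called $k$-uniform if, with $\rho = |\psi\rangle\langle\psi|$, for every subset $S \subseteq \{1,\dots,n\}$ with $|S| = k$ the reduced state of $\rho$ on the parties in $S$ equals $I/q^k$, where $I$ is the identity on $(\mathbb{C}^q)^{\otimes k}$. For an integer $l \ge 0$, an AME state of defect $l$ in $(\mathbb{C}^q)^{\otimes n}$ is a $(\lfloor n/2\rfloor - l)$-uniform state in $(\mathbb{C}^q)^{\otimes n}$. *)

theory Defs
  imports Complex_Main "HOL-Library.FuncSet"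
begin

text \<open>Computational basis of (C^q)^{tensor n}: configurations x : {0..<n} -> {0..<q}
  (extensional functions). A vector psi is a function from configurations to complex
  amplitudes; only its values on cfgs {..<n} q matter.\<close>

definition cfgs :: "nat set \<Rightarrow> nat \<Rightarrow> (nat \<Rightarrow> nat) set" where
  "cfgs S q = PiE S (\<lambda>_. {..<q})"

definition merge_cfg :: "nat set \<Rightarrow> (nat \<Rightarrow> nat) \<Rightarrow> (nat \<Rightarrow> nat) \<Rightarrow> (nat \<Rightarrow> nat)" where
  "merge_cfg S a y = (\<lambda>i. if i \<in> S then a i else y i)"

text \<open>Matrix entry (a,b) of the reduced state on parties S of rho = |psi><psi|,
  i.e. the partial trace over the complementary parties.\<close>
definition reduced_state ::
  "nat \<Rightarrow> nat \<Rightarrow> ((nat \<Rightarrow> nat) \<Rightarrow> complex) \<Rightarrow> nat set \<Rightarrow> (nat \<Rightarrow> nat) \<Rightarrow> (nat \<Rightarrow> nat) \<Rightarrow> complex" where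
  "reduced_state n q \<psi> S a b =
     (\<Sum>y\<in>cfgs ({..<n} - S) q. \<psi> (merge_cfg S a y) * cnj (\<psi> (merge_cfg S b y)))"

definition pure_state :: "nat \<Rightarrow> nat \<Rightarrow> ((nat \<Rightarrow> nat) \<Rightarrow> complex) \<Rightarrow> bool" where
  "pure_state n q \<psi> \<longleftrightarrow> (\<Sum>x\<in>cfgs {..<n} q. (cmod (\<psi> x))\<^sup>2) = 1"

definition k_uniform :: "nat \<Rightarrow> nat \<Rightarrow> nat \<Rightarrow> ((nat \<Rightarrow> nat) \<Rightarrow> complex) \<Rightarrow> bool" where
  "k_uniform n q k \<psi> \<longleftrightarrow> pure_state n q \<psi> \<and>
     (\<forall>S. S \<subseteq> {..<n} \<and> card S = k \<longrightarrow>
        (\<forall>a\<in>cfgs S q. \<forall>b\<in>cfgs S q.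
           reduced_state n q \<psi> S a b = (if a = b then 1 / (of_nat q) ^ k else 0)))"

definition AME_defect :: "nat \<Rightarrow> nat \<Rightarrow> nat \<Rightarrow> ((nat \<Rightarrow> nat) \<Rightarrow> complex) \<Rightarrow> bool" where
  "AME_defect n q l \<psi> \<longleftrightarrow> k_uniform n q (n div 2 - l) \<psi>"

end

theory Submission
  imports Defs
begin

text \<open>
  Write rho = |psi><psi| and D(V) = q^|V| tr(rho_V^2) - 1. For nonempty T the Moebius transform
  A(T) = sum over W in T of (-1)^(|T|+|W|) D(W) is Rains' unitary enumerator coefficient, and it is
  nonnegative: peeling off one party, it splits into off-diagonal blocks, nonnegative by induction,
  and a diagonal part that is a variance. For a k-uniform state D vanishes on sets of size at most k,
  and because tr(rho_V^2) = tr(rho_{V^c}^2) it is also known on sets of size n - k and n - k + 1.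
  Summing D(R - {x}) = sum over T in R - {x} of A(T) over the points x of a set R of size
  N = n - k + 1, and using A(T) = 0 for |T| <= k, gives N (q^d - 1) <= d (q^(d+2) - 1) with
  d = n - 2k, hence N < 2 d q^2. An AME state of defect l has d <= 2l + 1, so n < 4 (2l + 1) q^2.
\<close>

lemma sum_swap_outer:
  fixes g :: "_ \<Rightarrow> _ \<Rightarrow> _ \<Rightarrow> 'a::comm_monoid_add"
  shows "(\<Sum>c\<in>C. \<Sum>a\<in>A. \<Sum>b\<in>B. g c a b) = (\<Sum>a\<in>A. \<Sum>b\<in>B. \<Sum>c\<in>C. g c a b)"
  by (subst sum.swap, rule sum.cong[OF refl], rule sum.swap)

lemma sum_swap_pairs:
  fixes g :: "_ \<Rightarrow> _ \<Rightarrow> _ \<Rightarrow> _ \<Rightarrow> 'a::comm_monoid_add"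
  shows "(\<Sum>c\<in>C. \<Sum>d\<in>D. \<Sum>a\<in>A. \<Sum>b\<in>B. g c d a b)
       = (\<Sum>a\<in>A. \<Sum>b\<in>B. \<Sum>c\<in>C. \<Sum>d\<in>D. g c d a b)"
  by (simp only: sum_swap_outer[of _ D] sum_swap_outer[of _ C])

lemma sum_Pow_insert:
  fixes f :: "'a set \<Rightarrow> 'b::comm_monoid_add"
  assumes "finite A" "x \<notin> A"
  shows "(\<Sum>B\<in>Pow (insert x A). f B) = (\<Sum>B\<in>Pow A. f B) + (\<Sum>B\<in>Pow A. f (insert x B))"
proof -
  have "inj_on (insert x) (Pow A)"
    using assms(2) unfolding inj_on_def by (metis PowD insert_ident subsetD)
  moreover have "Pow A \<inter> insert x ` Pow A = {}"
    using assms(2) by auto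
  ultimately show ?thesis
    unfolding Pow_insert using assms(1) by (simp add: sum.union_disjoint sum.reindex)
qed

lemma sum_Pow_neg_one_card:
  assumes "finite T" "T \<noteq> {}"
  shows "(\<Sum>W\<in>Pow T. (-1::'a::ring_1) ^ card W) = 0"
proof -
  obtain x where x: "x \<in> T"
    using assms(2) by blast
  have "(-1::'a) ^ card (insert x W) = - ((-1) ^ card W)" if "W \<subseteq> T - {x}" for W
    using that assms(1) by (subst card_insert_disjoint) (auto dest: finite_subset)
  then show ?thesis
    using sum_Pow_insert[of "T - {x}" x "\<lambda>W. (-1::'a) ^ card W"] assms(1) x
    by (simp add: insert_absorb sum_negf)
qed

lemma sum_Pow_mobius:
  fixes D :: "'a set \<Rightarrow> 'b::comm_ring_1"
  assumes "finite S"
  shows "(\<Sum>T\<in>Pow S. \<Sum>W\<in>Pow T. (-1) ^ (card T + card W) * D W) = D S"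
proof -
  define g where "g S = (\<Sum>T\<in>Pow S. (-1) ^ card T * D T)" for S
  have "D S = (\<Sum>T\<in>Pow S. (-1) ^ card T * g T)"
    by (rule inclusion_exclusion_symmetric) (simp_all add: g_def assms)
  then show ?thesis
    by (simp add: g_def sum_distrib_left power_add mult.assoc)
qed

lemma sum_remove_one_le:
  fixes D :: "'a set \<Rightarrow> real"
  assumes "finite R"
    and small: "\<And>T. T \<subseteq> R \<Longrightarrow> card T \<le> k \<Longrightarrow> D T = 0"
    and large: "\<And>T. T \<subseteq> R \<Longrightarrow> k < card T \<Longrightarrow>
      (\<Sum>W\<in>Pow T. (-1) ^ (card T + card W) * D W) \<ge> 0"
  shows "(\<Sum>x\<in>R. D (R - {x})) \<le> real (card R - Suc k) * D R"
proof -
  define A where "A T = (\<Sum>W\<in>Pow T. (-1) ^ (card T + card W) * D W)" for T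
  have A_small: "A T = 0" if "T \<subseteq> R" "card T \<le> k" for T
  proof -
    have "D W = 0" if "W \<subseteq> T" for W
      using \<open>T \<subseteq> R\<close> \<open>card T \<le> k\<close> \<open>W \<subseteq> T\<close> \<open>finite R\<close>
      by (intro small) (auto intro: le_trans[OF card_mono] finite_subset)
    then show ?thesis
      unfolding A_def by simp
  qed
  have "(\<Sum>x\<in>R. D (R - {x})) = (\<Sum>x\<in>R. \<Sum>T\<in>Pow R. if x \<notin> T then A T else 0)"
  proof (rule sum.cong[OF refl])
    fix x
    have "Pow (R - {x}) = {T \<in> Pow R. x \<notin> T}"
      by auto
    then have "(\<Sum>T\<in>Pow R. if x \<notin> T then A T else 0) = (\<Sum>T\<in>Pow (R - {x}). A T)"
      using \<open>finite R\<close> sum.inter_filter[of "Pow R" A "\<lambda>T. x \<notin> T"] by simp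
    then show "D (R - {x}) = (\<Sum>T\<in>Pow R. if x \<notin> T then A T else 0)"
      using sum_Pow_mobius[of "R - {x}" D] \<open>finite R\<close> by (simp add: A_def)
  qed
  also have "\<dots> = (\<Sum>T\<in>Pow R. real (card (R - T)) * A T)"
    using \<open>finite R\<close> by (subst sum.swap) (simp add: sum.If_cases Diff_eq Compl_eq)
  also have "\<dots> \<le> (\<Sum>T\<in>Pow R. real (card R - Suc k) * A T)"
  proof (rule sum_mono)
    fix T assume "T \<in> Pow R"
    moreover have "card (R - T) = card R - card T" if "T \<subseteq> R"
      using that \<open>finite R\<close> by (simp add: card_Diff_subset finite_subset)
    ultimately show "real (card (R - T)) * A T \<le> real (card R - Suc k) * A T"
      using A_small large[of T] unfolding A_def by (cases "card T \<le> k") (auto intro!: mult_right_mono)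
  qed
  also have "\<dots> = real (card R - Suc k) * D R"
    by (simp only: A_def sum_distrib_left[symmetric] sum_Pow_mobius[OF \<open>finite R\<close>])
  finally show ?thesis .
qed

lemma cmod_sq_eq_Re: "(cmod z)\<^sup>2 = Re (z * cnj z)"
  by (simp add: complex_mult_cnj cmod_def)

lemma sum_cmod_sq_defect:
  fixes t :: "nat \<Rightarrow> complex"
  shows "real q * (\<Sum>c<q. (cmod (t c))\<^sup>2) - (cmod (\<Sum>c<q. t c))\<^sup>2
         = (\<Sum>c<q. \<Sum>c'<q. (cmod (t c - t c'))\<^sup>2) / 2"
proof -
  have diff: "(cmod (t c - t c'))\<^sup>2 = (cmod (t c))\<^sup>2 + (cmod (t c'))\<^sup>2 - 2 * Re (t c * cnj (t c'))" for c c'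
    unfolding cmod_sq_eq_Re by (simp add: algebra_simps)
  have sum: "(cmod (\<Sum>c<q. t c))\<^sup>2 = (\<Sum>c<q. \<Sum>c'<q. Re (t c * cnj (t c')))"
    unfolding cmod_sq_eq_Re by (simp add: cnj_sum sum_product Re_sum)
  have "(\<Sum>c<q. \<Sum>c'<q. (cmod (t c - t c'))\<^sup>2)
      = (\<Sum>c<q. \<Sum>c'<q. (cmod (t c))\<^sup>2) + (\<Sum>c<q. \<Sum>c'<q. (cmod (t c'))\<^sup>2)
        - 2 * (\<Sum>c<q. \<Sum>c'<q. Re (t c * cnj (t c')))"
    unfolding diff by (simp only: sum.distrib sum_subtractf sum_distrib_left)
  moreover have "(\<Sum>c<q. \<Sum>c'<q. (cmod (t c'))\<^sup>2) = (\<Sum>c<q. \<Sum>c'<q. (cmod (t c))\<^sup>2)"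
    by (rule sum.swap)
  moreover have "(\<Sum>c<q. \<Sum>c'<q. (cmod (t c))\<^sup>2) = real q * (\<Sum>c<q. (cmod (t c))\<^sup>2)"
    by (simp add: sum_distrib_left)
  ultimately show ?thesis
    unfolding sum by linarith
qed

type_synonym cfg = "nat \<Rightarrow> nat"
type_synonym operator = "cfg \<Rightarrow> cfg \<Rightarrow> complex"

lemma finite_cfgs: "finite S \<Longrightarrow> finite (cfgs S q)"
  unfolding cfgs_def by (simp add: finite_PiE)

lemma card_cfgs: "finite S \<Longrightarrow> card (cfgs S q) = q ^ card S"
  unfolding cfgs_def by (simp add: card_PiE)

lemma sum_cfgs_insert:
  assumes "i \<notin> S"
  shows "(\<Sum>y\<in>cfgs (insert i S) q. f y) = (\<Sum>c<q. \<Sum>g\<in>cfgs S q. f (g(i := c)))"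
proof -
  have "(\<Sum>y\<in>cfgs (insert i S) q. f y) = (\<Sum>y\<in>(\<lambda>(c, g). g(i := c)) ` ({..<q} \<times> cfgs S q). f y)"
    unfolding cfgs_def by (simp add: PiE_insert_eq)
  also have "\<dots> = (\<Sum>(c, g)\<in>{..<q} \<times> cfgs S q. f (g(i := c)))"
    using inj_combinator[OF assms, of "\<lambda>_. {..<q}"]
    by (subst sum.reindex) (auto simp: cfgs_def case_prod_unfold)
  finally show ?thesis
    by (simp add: sum.cartesian_product)
qed

lemma merge_cfg_in_cfgs:
  assumes "a \<in> cfgs A q" "y \<in> cfgs B q" "A \<inter> B = {}"
  shows "merge_cfg A a y \<in> cfgs (A \<union> B) q"
  using assms unfolding cfgs_def merge_cfg_def by (auto simp: PiE_iff extensional_def)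

lemma merge_cfg_commute:
  assumes "a \<in> cfgs A q" "y \<in> cfgs B q" "A \<inter> B = {}"
  shows "merge_cfg A a y = merge_cfg B y a"
  using assms unfolding cfgs_def merge_cfg_def by (auto simp: PiE_iff extensional_def fun_eq_iff)

lemma merge_cfg_eq_iff:
  assumes "a \<in> cfgs A q" "b \<in> cfgs A q"
  shows "merge_cfg A a y = merge_cfg A b y \<longleftrightarrow> a = b"
  using assms unfolding cfgs_def merge_cfg_def
  by (auto simp: PiE_iff extensional_def fun_eq_iff) metis

lemma merge_cfg_upd: "i \<notin> V \<Longrightarrow> merge_cfg V a (g(i := c)) = (merge_cfg V a g)(i := c)"
  unfolding merge_cfg_def by auto

lemma merge_cfg_insert_upd: "merge_cfg (insert i V) (a(i := c)) y = (merge_cfg V a y)(i := c)"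
  unfolding merge_cfg_def by auto

lemma sum_cfgs_Un:
  assumes "A \<inter> B = {}"
  shows "(\<Sum>w\<in>cfgs (A \<union> B) q. f w) = (\<Sum>y\<in>cfgs A q. \<Sum>z\<in>cfgs B q. f (merge_cfg A y z))"
proof -
  have "bij_betw (\<lambda>(y, z). merge_cfg A y z) (cfgs A q \<times> cfgs B q) (cfgs (A \<union> B) q)"
  proof (rule bij_betwI[where g = "\<lambda>w. (restrict w A, restrict w B)"])
    show "(\<lambda>(y, z). merge_cfg A y z) \<in> cfgs A q \<times> cfgs B q \<rightarrow> cfgs (A \<union> B) q"
      using merge_cfg_in_cfgs[OF _ _ assms] by auto
    show "(\<lambda>w. (restrict w A, restrict w B)) \<in> cfgs (A \<union> B) q \<rightarrow> cfgs A q \<times> cfgs B q"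
      unfolding cfgs_def by auto
  qed (use assms in \<open>auto simp: cfgs_def merge_cfg_def PiE_iff extensional_def fun_eq_iff\<close>)
  then have "(\<Sum>w\<in>cfgs (A \<union> B) q. f w) = (\<Sum>(y, z)\<in>cfgs A q \<times> cfgs B q. f (merge_cfg A y z))"
    by (simp add: sum.reindex_bij_betw[symmetric] case_prod_unfold)
  then show ?thesis
    by (simp add: sum.cartesian_product)
qed

section \<open>Partial traces and Hilbert-Schmidt norms\<close>

definition partial_trace :: "nat \<Rightarrow> nat set \<Rightarrow> nat set \<Rightarrow> operator \<Rightarrow> operator" where
  "partial_trace q U V \<sigma> a b = (\<Sum>y\<in>cfgs (U - V) q. \<sigma> (merge_cfg V a y) (merge_cfg V b y))"

definition hs_norm2 :: "nat \<Rightarrow> nat set \<Rightarrow> nat set \<Rightarrow> operator \<Rightarrow> real" where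
  "hs_norm2 q U V \<sigma> = (\<Sum>a\<in>cfgs V q. \<Sum>b\<in>cfgs V q. (cmod (partial_trace q U V \<sigma> a b))\<^sup>2)"

definition slice :: "nat \<Rightarrow> nat \<Rightarrow> nat \<Rightarrow> operator \<Rightarrow> operator" where
  "slice i c d \<sigma> = (\<lambda>x x'. \<sigma> (x(i := c)) (x'(i := d)))"

definition trace_site :: "nat \<Rightarrow> nat \<Rightarrow> operator \<Rightarrow> operator" where
  "trace_site q i \<sigma> = (\<lambda>x x'. \<Sum>c<q. slice i c c \<sigma> x x')"

lemma partial_trace_diff:
  "partial_trace q U V (\<lambda>x y. \<sigma> x y - \<tau> x y) a b = partial_trace q U V \<sigma> a b - partial_trace q U V \<tau> a b"
  unfolding partial_trace_def by (simp add: sum_subtractf)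

lemma partial_trace_trace_site:
  "partial_trace q U V (trace_site q i \<sigma>) a b = (\<Sum>c<q. partial_trace q U V (slice i c c \<sigma>) a b)"
  unfolding partial_trace_def trace_site_def by (rule sum.swap)

lemma partial_trace_remove_site:
  assumes "i \<in> U" "i \<notin> V"
  shows "partial_trace q U V \<sigma> a b = partial_trace q (U - {i}) V (trace_site q i \<sigma>) a b"
proof -
  have "U - V = insert i (U - {i} - V)"
    using assms by auto
  then have "partial_trace q U V \<sigma> a b
      = (\<Sum>c<q. \<Sum>y\<in>cfgs (U - {i} - V) q. \<sigma> ((merge_cfg V a y)(i := c)) ((merge_cfg V b y)(i := c)))"
    unfolding partial_trace_def using assms by (simp add: sum_cfgs_insert merge_cfg_upd)
  also have "\<dots> = partial_trace q (U - {i}) V (trace_site q i \<sigma>) a b"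
    unfolding partial_trace_def trace_site_def slice_def by (rule sum.swap)
  finally show ?thesis .
qed

lemma partial_trace_insert_site:
  "partial_trace q U (insert i V) \<sigma> (a(i := c)) (b(i := d)) = partial_trace q (U - {i}) V (slice i c d \<sigma>) a b"
proof -
  have "U - insert i V = U - {i} - V"
    by auto
  then show ?thesis
    unfolding partial_trace_def slice_def by (simp add: merge_cfg_insert_upd)
qed

lemma hs_norm2_nonneg: "hs_norm2 q U V \<sigma> \<ge> 0"
  unfolding hs_norm2_def by (intro sum_nonneg) auto

lemma hs_norm2_remove_site:
  "i \<in> U \<Longrightarrow> i \<notin> V \<Longrightarrow> hs_norm2 q U V \<sigma> = hs_norm2 q (U - {i}) V (trace_site q i \<sigma>)"
  unfolding hs_norm2_def by (simp add: partial_trace_remove_site)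

lemma hs_norm2_insert_site:
  assumes "i \<notin> V"
  shows "hs_norm2 q U (insert i V) \<sigma> = (\<Sum>c<q. \<Sum>d<q. hs_norm2 q (U - {i}) V (slice i c d \<sigma>))"
proof -
  have "hs_norm2 q U (insert i V) \<sigma>
      = (\<Sum>c<q. \<Sum>a\<in>cfgs V q. \<Sum>d<q. \<Sum>b\<in>cfgs V q.
          (cmod (partial_trace q (U - {i}) V (slice i c d \<sigma>) a b))\<^sup>2)"
    unfolding hs_norm2_def using assms by (simp add: sum_cfgs_insert partial_trace_insert_site)
  then show ?thesis
    unfolding hs_norm2_def by (simp only: sum.swap[where A = "cfgs V q" and B = "{..<q}"])
qed

lemma hs_norm2_trace_site_defect:
  "real q * (\<Sum>c<q. hs_norm2 q U V (slice i c c \<sigma>)) - hs_norm2 q U V (trace_site q i \<sigma>)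
   = (\<Sum>c<q. \<Sum>c'<q. hs_norm2 q U V (\<lambda>x y. slice i c c \<sigma> x y - slice i c' c' \<sigma> x y)) / 2"
proof -
  define t where "t a b c = partial_trace q U V (slice i c c \<sigma>) a b" for a b c
  have slices: "(\<Sum>c<q. hs_norm2 q U V (slice i c c \<sigma>))
      = (\<Sum>a\<in>cfgs V q. \<Sum>b\<in>cfgs V q. \<Sum>c<q. (cmod (t a b c))\<^sup>2)"
    unfolding hs_norm2_def t_def by (rule sum_swap_outer)
  have traced: "hs_norm2 q U V (trace_site q i \<sigma>)
      = (\<Sum>a\<in>cfgs V q. \<Sum>b\<in>cfgs V q. (cmod (\<Sum>c<q. t a b c))\<^sup>2)"
    unfolding hs_norm2_def partial_trace_trace_site t_def ..
  have differences: "(\<Sum>c<q. \<Sum>c'<q. hs_norm2 q U V (\<lambda>x y. slice i c c \<sigma> x y - slice i c' c' \<sigma> x y))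
      = (\<Sum>a\<in>cfgs V q. \<Sum>b\<in>cfgs V q. \<Sum>c<q. \<Sum>c'<q. (cmod (t a b c - t a b c'))\<^sup>2)"
    unfolding hs_norm2_def partial_trace_diff t_def by (rule sum_swap_pairs)
  have "real q * (\<Sum>c<q. hs_norm2 q U V (slice i c c \<sigma>)) - hs_norm2 q U V (trace_site q i \<sigma>)
      = (\<Sum>a\<in>cfgs V q. \<Sum>b\<in>cfgs V q. real q * (\<Sum>c<q. (cmod (t a b c))\<^sup>2) - (cmod (\<Sum>c<q. t a b c))\<^sup>2)"
    unfolding slices traced by (simp only: sum_distrib_left sum_subtractf)
  also have "\<dots> = (\<Sum>a\<in>cfgs V q. \<Sum>b\<in>cfgs V q. (\<Sum>c<q. \<Sum>c'<q. (cmod (t a b c - t a b c'))\<^sup>2) / 2)"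
    by (simp only: sum_cmod_sq_defect)
  finally show ?thesis
    unfolding differences by (simp only: sum_divide_distrib)
qed

section \<open>Unitary enumerator\<close>

definition enumerator_coeff :: "nat \<Rightarrow> nat set \<Rightarrow> nat set \<Rightarrow> operator \<Rightarrow> real" where
  "enumerator_coeff q U0 U \<sigma> = (\<Sum>V\<in>Pow U. (-1) ^ (card U + card V) * real q ^ card V * hs_norm2 q U0 V \<sigma>)"

lemma enumerator_coeff_insert:
  assumes "finite U" "i \<notin> U" "i \<in> U0"
  shows "enumerator_coeff q U0 (insert i U) \<sigma>
    = real q * (\<Sum>c<q. \<Sum>d<q. enumerator_coeff q (U0 - {i}) U (slice i c d \<sigma>))
      - enumerator_coeff q (U0 - {i}) U (trace_site q i \<sigma>)"
proof -
  define w where "w V = (-1::real) ^ (card U + card V) * real q ^ card V" for V :: "nat set"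
  define f where "f V = (-1) ^ (card (insert i U) + card V) * real q ^ card V * hs_norm2 q U0 V \<sigma>" for V
  have without_i: "f V = - (w V * hs_norm2 q (U0 - {i}) V (trace_site q i \<sigma>))" if "V \<in> Pow U" for V
  proof -
    have "i \<notin> V"
      using that assms by auto
    then show ?thesis
      using assms by (simp add: f_def w_def hs_norm2_remove_site)
  qed
  have with_i: "f (insert i V) = real q * (\<Sum>c<q. \<Sum>d<q. w V * hs_norm2 q (U0 - {i}) V (slice i c d \<sigma>))"
    if "V \<in> Pow U" for V
  proof -
    have "i \<notin> V" "finite V"
      using that assms by (auto dest: finite_subset)
    then show ?thesis
      using assms by (simp add: f_def w_def hs_norm2_insert_site sum_distrib_left mult_ac)
  qed
  have "enumerator_coeff q U0 (insert i U) \<sigma> = (\<Sum>V\<in>Pow U. f V) + (\<Sum>V\<in>Pow U. f (insert i V))"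
    unfolding enumerator_coeff_def f_def using assms by (simp add: sum_Pow_insert)
  also have "\<dots> = - (\<Sum>V\<in>Pow U. w V * hs_norm2 q (U0 - {i}) V (trace_site q i \<sigma>))
      + real q * (\<Sum>V\<in>Pow U. \<Sum>c<q. \<Sum>d<q. w V * hs_norm2 q (U0 - {i}) V (slice i c d \<sigma>))"
    by (simp add: without_i with_i sum_negf sum_distrib_left)
  also have "\<dots> = real q * (\<Sum>c<q. \<Sum>d<q. enumerator_coeff q (U0 - {i}) U (slice i c d \<sigma>))
      - enumerator_coeff q (U0 - {i}) U (trace_site q i \<sigma>)"
    unfolding enumerator_coeff_def w_def sum_swap_outer[where C = "Pow U"] by simp
  finally show ?thesis .
qed

lemma enumerator_coeff_trace_site_defect:
  "real q * (\<Sum>c<q. enumerator_coeff q U0 U (slice i c c \<sigma>)) - enumerator_coeff q U0 U (trace_site q i \<sigma>)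
   = (\<Sum>c<q. \<Sum>c'<q. enumerator_coeff q U0 U (\<lambda>x y. slice i c c \<sigma> x y - slice i c' c' \<sigma> x y)) / 2"
proof -
  define w where "w V = (-1::real) ^ (card U + card V) * real q ^ card V" for V :: "nat set"
  have "real q * (\<Sum>c<q. enumerator_coeff q U0 U (slice i c c \<sigma>)) - enumerator_coeff q U0 U (trace_site q i \<sigma>)
      = (\<Sum>V\<in>Pow U. w V * (real q * (\<Sum>c<q. hs_norm2 q U0 V (slice i c c \<sigma>)) - hs_norm2 q U0 V (trace_site q i \<sigma>)))"
    unfolding enumerator_coeff_def w_def
    by (simp add: sum_distrib_left right_diff_distrib sum_subtractf mult_ac sum.swap[where B = "Pow U"])
  also have "\<dots> = (\<Sum>V\<in>Pow U.
      w V * (\<Sum>c<q. \<Sum>c'<q. hs_norm2 q U0 V (\<lambda>x y. slice i c c \<sigma> x y - slice i c' c' \<sigma> x y)) / 2)"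
    by (simp only: hs_norm2_trace_site_defect times_divide_eq_right)
  also have "\<dots> = (\<Sum>c<q. \<Sum>c'<q. enumerator_coeff q U0 U (\<lambda>x y. slice i c c \<sigma> x y - slice i c' c' \<sigma> x y)) / 2"
    unfolding enumerator_coeff_def w_def sum_swap_outer[where C = "{..<q}"]
    by (simp add: sum_distrib_left sum_divide_distrib mult_ac)
  finally show ?thesis .
qed

lemma enumerator_coeff_nonneg:
  assumes "finite U" "finite U0" "U \<subseteq> U0"
  shows "enumerator_coeff q U0 U \<sigma> \<ge> 0"
  using assms
proof (induction U arbitrary: U0 \<sigma> rule: finite_induct)
  case empty
  then show ?case
    by (simp add: enumerator_coeff_def hs_norm2_nonneg)
next
  case (insert i U)
  let ?E = "enumerator_coeff q (U0 - {i}) U"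
  have IH: "?E \<tau> \<ge> 0" for \<tau>
    using insert.IH[of "U0 - {i}"] insert.prems insert.hyps by auto
  have "real q * (\<Sum>c<q. ?E (slice i c c \<sigma>)) \<le> real q * (\<Sum>c<q. \<Sum>d<q. ?E (slice i c d \<sigma>))"
    by (intro mult_left_mono sum_mono member_le_sum) (auto simp: IH)
  moreover have "real q * (\<Sum>c<q. ?E (slice i c c \<sigma>)) - ?E (trace_site q i \<sigma>) \<ge> 0"
    unfolding enumerator_coeff_trace_site_defect by (simp add: IH sum_nonneg)
  ultimately show ?case
    using insert by (simp add: enumerator_coeff_insert)
qed

lemma enumerator_coeff_eq_mobius:
  assumes "finite U" "U \<noteq> {}"
  shows "(\<Sum>V\<in>Pow U. (-1) ^ (card U + card V) * (real q ^ card V * hs_norm2 q U0 V \<sigma> - 1))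
    = enumerator_coeff q U0 U \<sigma>"
proof -
  have "(\<Sum>V\<in>Pow U. (-1) ^ (card U + card V) * (real q ^ card V * hs_norm2 q U0 V \<sigma> - 1))
      = enumerator_coeff q U0 U \<sigma> - (-1) ^ card U * (\<Sum>V\<in>Pow U. (-1) ^ card V)"
    unfolding enumerator_coeff_def
    by (simp add: right_diff_distrib sum_subtractf sum_distrib_left power_add mult.assoc)
  then show ?thesis
    using sum_Pow_neg_one_card[OF assms] by simp
qed

section \<open>Uniform states\<close>

definition outer :: "(cfg \<Rightarrow> complex) \<Rightarrow> operator" where
  "outer \<psi> x x' = \<psi> x * cnj (\<psi> x')"

lemma partial_trace_outer: "partial_trace q {..<n} V (outer \<psi>) = reduced_state n q \<psi> V"
  by (simp add: fun_eq_iff partial_trace_def outer_def reduced_state_def)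

lemma hs_norm2_outer:
  "hs_norm2 q U V (outer \<psi>) = Re (\<Sum>a\<in>cfgs V q. \<Sum>b\<in>cfgs V q. \<Sum>y\<in>cfgs (U - V) q. \<Sum>y'\<in>cfgs (U - V) q.
      \<psi> (merge_cfg V a y) * cnj (\<psi> (merge_cfg V b y)) * cnj (\<psi> (merge_cfg V a y')) * \<psi> (merge_cfg V b y'))"
  unfolding hs_norm2_def cmod_sq_eq_Re partial_trace_def outer_def
  by (simp add: cnj_sum sum_product Re_sum mult.assoc)

lemma hs_norm2_outer_compl:
  assumes "V \<subseteq> U"
  shows "hs_norm2 q U (U - V) (outer \<psi>) = hs_norm2 q U V (outer \<psi>)"
proof -
  have compl: "U - (U - V) = V" and disj: "(U - V) \<inter> V = {}"
    using assms by auto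
  have "hs_norm2 q U (U - V) (outer \<psi>)
      = Re (\<Sum>a\<in>cfgs (U - V) q. \<Sum>b\<in>cfgs (U - V) q. \<Sum>y\<in>cfgs V q. \<Sum>y'\<in>cfgs V q.
      \<psi> (merge_cfg V y a) * cnj (\<psi> (merge_cfg V y b)) * cnj (\<psi> (merge_cfg V y' a)) * \<psi> (merge_cfg V y' b))"
    unfolding hs_norm2_outer compl
    by (intro arg_cong[where f = Re] sum.cong refl) (simp add: merge_cfg_commute[OF _ _ disj])
  also have "\<dots> = Re (\<Sum>y\<in>cfgs V q. \<Sum>y'\<in>cfgs V q. \<Sum>a\<in>cfgs (U - V) q. \<Sum>b\<in>cfgs (U - V) q.
      \<psi> (merge_cfg V y a) * cnj (\<psi> (merge_cfg V y b)) * cnj (\<psi> (merge_cfg V y' a)) * \<psi> (merge_cfg V y' b))"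
    by (rule arg_cong[where f = Re], rule sum_swap_pairs)
  also have "\<dots> = hs_norm2 q U V (outer \<psi>)"
    unfolding hs_norm2_outer by (intro arg_cong[where f = Re] sum.cong refl) (simp add: algebra_simps)
  finally show ?thesis .
qed

lemma reduced_state_subset:
  assumes "V \<subseteq> S" "S \<subseteq> {..<n}"
  shows "reduced_state n q \<psi> V = partial_trace q S V (reduced_state n q \<psi> S)"
proof (intro ext)
  fix a b
  have split: "{..<n} - V = (S - V) \<union> ({..<n} - S)" and disj: "(S - V) \<inter> ({..<n} - S) = {}"
    using assms by auto
  have merge: "merge_cfg S (merge_cfg V c y) z = merge_cfg V c (merge_cfg (S - V) y z)" for c y z
    using assms by (auto simp: merge_cfg_def fun_eq_iff)
  show "reduced_state n q \<psi> V a b = partial_trace q S V (reduced_state n q \<psi> S) a b"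
    unfolding reduced_state_def partial_trace_def split sum_cfgs_Un[OF disj] merge ..
qed

lemma k_uniform_mono:
  assumes uniform: "k_uniform n q k \<psi>" and "j \<le> k" "k \<le> n" "0 < q"
  shows "k_uniform n q j \<psi>"
  unfolding k_uniform_def
proof (intro conjI allI impI ballI)
  show "pure_state n q \<psi>"
    using uniform unfolding k_uniform_def by blast
  fix V a b
  assume V: "V \<subseteq> {..<n} \<and> card V = j" and a: "a \<in> cfgs V q" and b: "b \<in> cfgs V q"
  obtain S where S: "V \<subseteq> S" "S \<subseteq> {..<n}" "card S = k"
    using exists_subset_between[of V k "{..<n}"] V assms by auto
  moreover have "finite S"
    using S(2) finite_subset by blast
  ultimately have "finite (S - V)" "card (S - V) = k - j" "V \<union> (S - V) = S"
    using V by (auto simp: card_Diff_subset finite_subset)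
  moreover have "reduced_state n q \<psi> S (merge_cfg V a y) (merge_cfg V b y) = (if a = b then 1 / of_nat q ^ k else 0)"
    if y: "y \<in> cfgs (S - V) q" for y
  proof -
    have "merge_cfg V c y \<in> cfgs S q" if "c \<in> cfgs V q" for c
      using merge_cfg_in_cfgs[OF that y] \<open>V \<union> (S - V) = S\<close> by auto
    then show ?thesis
      using uniform S a b merge_cfg_eq_iff[OF a b] unfolding k_uniform_def by auto
  qed
  ultimately have "reduced_state n q \<psi> V a b = (if a = b then of_nat (q ^ (k - j)) / of_nat q ^ k else 0)"
    using reduced_state_subset[OF S(1,2)] by (simp add: partial_trace_def card_cfgs)
  also have "\<dots> = (if a = b then 1 / of_nat q ^ j else 0)"
  proof -
    have "(of_nat q :: complex) ^ k = of_nat (q ^ (k - j)) * of_nat q ^ j"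
      using \<open>j \<le> k\<close> by (simp flip: power_add)
    then show ?thesis
      using \<open>0 < q\<close> by simp
  qed
  finally show "reduced_state n q \<psi> V a b = (if a = b then 1 / of_nat q ^ j else 0)" .
qed

lemma k_uniform_hs_norm2:
  assumes "k_uniform n q k \<psi>" "0 < q" "V \<subseteq> {..<n}" "card V \<le> k" "k \<le> n"
  shows "hs_norm2 q {..<n} V (outer \<psi>) = 1 / real q ^ card V"
proof -
  have "k_uniform n q (card V) \<psi>"
    using k_uniform_mono assms by blast
  then have "reduced_state n q \<psi> V a b = (if a = b then 1 / of_nat q ^ card V else 0)"
    if "a \<in> cfgs V q" "b \<in> cfgs V q" for a b
    using that \<open>V \<subseteq> {..<n}\<close> unfolding k_uniform_def by blast
  then have "(cmod (reduced_state n q \<psi> V a b))\<^sup>2 = (if a = b then (1 / real q ^ card V)\<^sup>2 else 0)"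
    if "a \<in> cfgs V q" "b \<in> cfgs V q" for a b
    using that by (simp add: norm_divide norm_power)
  then have "hs_norm2 q {..<n} V (outer \<psi>)
      = (\<Sum>a\<in>cfgs V q. \<Sum>b\<in>cfgs V q. if a = b then (1 / real q ^ card V)\<^sup>2 else 0)"
    unfolding hs_norm2_def partial_trace_outer by (intro sum.cong refl) simp
  also have "\<dots> = real (card (cfgs V q)) * (1 / real q ^ card V)\<^sup>2"
    using finite_cfgs[of V q] \<open>V \<subseteq> {..<n}\<close> by (simp add: finite_subset)
  also have "\<dots> = 1 / real q ^ card V"
    using \<open>0 < q\<close> \<open>V \<subseteq> {..<n}\<close> by (simp add: card_cfgs finite_subset power2_eq_square)
  finally show ?thesis .
qed

lemma k_uniform_hs_norm2_compl:
  assumes "k_uniform n q k \<psi>" "0 < q" "V \<subseteq> {..<n}" "n \<le> card V + k" "2 * k \<le> n"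
  shows "real q ^ card V * hs_norm2 q {..<n} V (outer \<psi>) = real q ^ (2 * card V - n)"
proof -
  have card_compl: "card ({..<n} - V) = n - card V"
    using assms(3) by (simp add: card_Diff_subset finite_subset)
  have "card V \<le> n"
    using card_mono[OF _ assms(3)] by simp
  have "hs_norm2 q {..<n} V (outer \<psi>) = hs_norm2 q {..<n} ({..<n} - V) (outer \<psi>)"
    using hs_norm2_outer_compl[OF assms(3)] by simp
  also have "\<dots> = 1 / real q ^ (n - card V)"
    using k_uniform_hs_norm2[of n q k \<psi> "{..<n} - V"] assms card_compl by simp
  finally have "real q ^ card V * hs_norm2 q {..<n} V (outer \<psi>) = real q ^ card V / real q ^ (n - card V)"
    by simp
  also have "\<dots> = real q ^ (2 * card V - n)"
    using assms \<open>card V \<le> n\<close> \<open>0 < q\<close> by (simp add: power_diff[symmetric] diff_diff_right mult_2)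
  finally show ?thesis .
qed

lemma k_uniform_shadow_bound:
  assumes uniform: "k_uniform n q k \<psi>" and "0 < q" "1 \<le> k" "2 * k \<le> n"
  shows "real (n - k + 1) * (real q ^ (n - 2 * k) - 1)
    \<le> real (n - 2 * k) * (real q ^ (n - 2 * k + 2) - 1)"
proof -
  define D where "D V = real q ^ card V * hs_norm2 q {..<n} V (outer \<psi>) - 1" for V
  define R where "R = {..<n - k + 1}"
  have R: "R \<subseteq> {..<n}" "finite R" "card R = n - k + 1"
    using assms unfolding R_def by auto
  have small: "D T = 0" if "T \<subseteq> R" "card T \<le> k" for T
    using that R assms k_uniform_hs_norm2[OF uniform \<open>0 < q\<close>, of T] unfolding D_def by auto
  have large: "(\<Sum>W\<in>Pow T. (-1) ^ (card T + card W) * D W) \<ge> 0" if "T \<subseteq> R" "k < card T" for T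
  proof -
    have "finite T" "T \<noteq> {}" "T \<subseteq> {..<n}"
      using that R by (auto intro: finite_subset)
    then show ?thesis
      unfolding D_def by (simp add: enumerator_coeff_eq_mobius enumerator_coeff_nonneg)
  qed
  have D_R: "D R = real q ^ (n - 2 * k + 2) - 1"
  proof -
    have "2 * card R - n = n - 2 * k + 2"
      using R assms by simp
    then show ?thesis
      using k_uniform_hs_norm2_compl[OF uniform \<open>0 < q\<close> R(1)] R assms unfolding D_def by simp
  qed
  have D_remove: "D (R - {x}) = real q ^ (n - 2 * k) - 1" if "x \<in> R" for x
  proof -
    have "R - {x} \<subseteq> {..<n}" "card (R - {x}) = n - k" "2 * (n - k) - n = n - 2 * k"
      using that R assms by auto
    then show ?thesis
      using k_uniform_hs_norm2_compl[OF uniform \<open>0 < q\<close>, of "R - {x}"] assms unfolding D_def by simp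
  qed
  have "real (n - k + 1) * (real q ^ (n - 2 * k) - 1) = (\<Sum>x\<in>R. D (R - {x}))"
    using R by (simp add: D_remove)
  also have "\<dots> \<le> real (card R - Suc k) * D R"
    using sum_remove_one_le[where k = k, OF R(2) small large] .
  also have "\<dots> = real (n - 2 * k) * (real q ^ (n - 2 * k + 2) - 1)"
  proof -
    have "card R - Suc k = n - 2 * k"
      using R by simp
    then show ?thesis
      by (simp only: D_R)
  qed
  finally show ?thesis .
qed

lemma k_uniform_length_bound:
  assumes "k_uniform n q k \<psi>" "2 \<le> q" "1 \<le> k" "2 * k < n"
  shows "real (n - k + 1) < 2 * real (n - 2 * k) * (real q)\<^sup>2"
proof -
  define N d X where "N = real (n - k + 1)" and "d = real (n - 2 * k)" and "X = real q ^ (n - 2 * k)"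
  have "X \<ge> 2"
    unfolding X_def using assms order.trans[OF _ power_increasing[of 1 "n - 2 * k" "real q"]] by force
  have "N * (X - 1) \<le> d * ((real q)\<^sup>2 * X - 1)"
    using k_uniform_shadow_bound[of n q k \<psi>] assms unfolding N_def d_def X_def
    by (simp add: power_add power2_eq_square mult_ac)
  also have "\<dots> < d * (real q)\<^sup>2 * X"
    using assms unfolding d_def by (simp add: right_diff_distrib)
  moreover have "N * (X / 2) \<le> N * (X - 1)"
    using \<open>X \<ge> 2\<close> unfolding N_def by (intro mult_left_mono) auto
  ultimately have "N * (X / 2) < (2 * d * (real q)\<^sup>2) * (X / 2)"
    by simp
  then show ?thesis
    unfolding N_def d_def by (rule mult_right_less_imp_less) (use \<open>X \<ge> 2\<close> in simp)
qed

lemma AME_defect_length_bound: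
  assumes "AME_defect n q l \<psi>" "2 \<le> q" "1 \<le> l" "2 * l + 2 \<le> n"
  shows "real n < 4 * (2 * real l + 1) * (real q)\<^sup>2"
proof -
  define k d N where "k = n div 2 - l" and "d = n - 2 * k" and "N = n - k + 1"
  have "1 \<le> k" "2 * k < n" "d \<le> 2 * l + 1" "n + 2 \<le> 2 * N"
    using assms(3,4) unfolding k_def d_def N_def by auto
  have uniform: "k_uniform n q k \<psi>"
    using assms(1) unfolding AME_defect_def k_def .
  have "real (n + 2) \<le> real (2 * N)"
    using \<open>n + 2 \<le> 2 * N\<close> by (rule of_nat_mono)
  also have "\<dots> < 4 * real d * (real q)\<^sup>2"
    using k_uniform_length_bound[OF uniform assms(2) \<open>1 \<le> k\<close> \<open>2 * k < n\<close>, folded d_def N_def]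
    by simp
  also have "\<dots> \<le> 4 * (2 * real l + 1) * (real q)\<^sup>2"
    using \<open>d \<le> 2 * l + 1\<close> by (intro mult_right_mono) auto
  finally show ?thesis
    by simp
qed

theorem corollary2:
  fixes l :: nat
  assumes "l \<ge> 2"
  shows "\<exists>c::real. \<exists>Q::nat. \<forall>q n. q \<ge> Q \<and> real n > c * (real q)\<^sup>2 \<longrightarrow>
           \<not> (\<exists>\<psi>. AME_defect n q l \<psi>)"
proof (intro exI[of _ "4 * (2 * real l + 1)"] exI[of _ 2] allI impI notI)
  fix q n
  assume "2 \<le> q \<and> 4 * (2 * real l + 1) * (real q)\<^sup>2 < real n"
  then have q: "2 \<le> q" and n: "4 * (2 * real l + 1) * (real q)\<^sup>2 < real n"
    by auto
  assume "\<exists>\<psi>. AME_defect n q l \<psi>"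
  then obtain \<psi> where AME: "AME_defect n q l \<psi>"
    by blast
  have "4 \<le> (real q)\<^sup>2"
    using q power_mono[of 2 "real q" 2] by simp
  then have "4 * (2 * real l + 1) * 4 \<le> 4 * (2 * real l + 1) * (real q)\<^sup>2"
    by (intro mult_left_mono) auto
  then have "real (2 * l + 2) \<le> real n"
    using n by simp
  then show False
    using AME_defect_length_bound[OF AME q] assms n by simp
qed

end
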